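(* For every product distribution $\mathcal{D}=\prod_{r=1}^d\mathcal{D}_r$ on $[n]^d$, $\Delta(\mathcal{D})\le 5\,\Delta^*(\mathcal{D})$.
   Context: For a distribution $\mathcal{D}_r$ on $[n]$ with mass function $\mu$, the median BST $T_r$ is built recursively: for an interval $I$ of integers, its root is the smallest $t\in I$ with $\mu(\{s\in I:s\le t\})\ge\mu(I)/2$, and the left and right subtrees are the median BSTs of $\{s\in I:s<t\}$ and $\{s\in I:s>t\}$ (empty intervals give empty trees); $T_r$ is the median BST of $[n]$. Depth of a node is the number of edges to the root. $\Delta(\mathcal{D})=\sum_{r=1}^d\mathbb{E}_{x\sim\mathcal{D}_r}[\mathrm{depth}_{T_r}(x)]$, and $\Delta^*(\mathcal{D})=\sum_{r=1}^d\min_T\mathbb{E}_{x\sim\mathcal{D}_r}[\mathrm{depth}_T(x)]$, the minimum over all binary search trees $T$ on $[n]$. *)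

theory Defs
  imports Complex_Main "HOL-Library.Tree"
begin

text \<open>Root choice for the median BST of the half-open integer interval [a, b).
  The disjunct t = b - 1 only matters if the mass of the interval is negative,
  which never happens for a probability mass function (then t = b - 1 already
  satisfies the median condition); it just makes the definition total.\<close>

definition med_root :: "(nat \<Rightarrow> real) \<Rightarrow> nat \<Rightarrow> nat \<Rightarrow> nat" where
  "med_root \<mu> a b = (LEAST t. a \<le> t \<and> t < b \<and>
      (t = b - 1 \<or> (\<Sum>s\<in>{a..t}. \<mu> s) \<ge> (\<Sum>s\<in>{a..<b}. \<mu> s) / 2))"

lemma med_root_range: "a < b \<Longrightarrow> a \<le> med_root \<mu> a b \<and> med_root \<mu> a b < b"
  unfolding med_root_def
  by (rule LeastI2[where a = "b - 1"]) auto

function med_tree :: "(nat \<Rightarrow> real) \<Rightarrow> nat \<Rightarrow> nat \<Rightarrow> nat tree" where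
  "med_tree \<mu> a b = (if b \<le> a then Leaf else
     Node (med_tree \<mu> a (med_root \<mu> a b)) (med_root \<mu> a b)
          (med_tree \<mu> (Suc (med_root \<mu> a b)) b))"
  by pat_completeness auto
termination
  by (relation "measure (\<lambda>(\<mu>, a, b). b - a)")
     (auto, (metis med_root_range not_le diff_less_mono),
      (metis med_root_range not_le diff_less_mono2 le_imp_less_Suc))

definition median_bst :: "(nat \<Rightarrow> real) \<Rightarrow> nat \<Rightarrow> nat tree" where
  "median_bst \<mu> n = med_tree \<mu> 1 (Suc n)"

fun depth :: "nat \<Rightarrow> nat tree \<Rightarrow> nat" where
  "depth x Leaf = 0"
| "depth x (Node l y r) = (if x = y then 0 else if x < y then Suc (depth x l) else Suc (depth x r))"

definition exp_depth :: "(nat \<Rightarrow> real) \<Rightarrow> nat \<Rightarrow> nat tree \<Rightarrow> real" where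
  "exp_depth \<mu> n T = (\<Sum>x\<in>{1..n}. \<mu> x * real (depth x T))"

definition bsts_on :: "nat \<Rightarrow> nat tree set" where
  "bsts_on n = {T. bst T \<and> set_tree T = {1..n}}"

text \<open>\<mu> r is the mass function of the marginal D_r.\<close>
definition Delta :: "(nat \<Rightarrow> nat \<Rightarrow> real) \<Rightarrow> nat \<Rightarrow> nat \<Rightarrow> real" where
  "Delta \<mu> d n = (\<Sum>r\<in>{1..d}. exp_depth (\<mu> r) n (median_bst (\<mu> r) n))"

definition Delta_opt :: "(nat \<Rightarrow> nat \<Rightarrow> real) \<Rightarrow> nat \<Rightarrow> nat \<Rightarrow> real" where
  "Delta_opt \<mu> d n = (\<Sum>r\<in>{1..d}. Min (exp_depth (\<mu> r) n ` bsts_on n))"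

end

theory Submission
  imports Defs
begin

text \<open>The median BST is in fact within a factor 2 of the optimum in every coordinate. Fix any
  BST T containing the interval I on which a median subtree with root m is built, and charge the
  median tree's depth to ancestors in T: an element of I pays for each of its ancestors in T that
  lies in I. Splitting I at m into L, {m}, R, the ancestors of L-elements inside L and of
  R-elements inside R pay for the two median subtrees by induction. The remaining ancestor pairs
  pay for the root level, which costs \<mu>(L) + \<mu>(R): the topmost node of T within I is an ancestor
  of all of I, so if it lies in L, every element of {m} \<union> R has an ancestor in L, and the median
  property \<mu>(L) \<le> \<mu>(m) + \<mu>(R) makes \<mu>(m) + \<mu>(R) at least half the root-level cost; the other
  cases are symmetric.\<close>

fun depth_in :: "nat set \<Rightarrow> nat \<Rightarrow> nat tree \<Rightarrow> nat" where
  "depth_in B x Leaf = 0"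
| "depth_in B x (Node l y r) =
     (if x = y then 0
      else (if y \<in> B then 1 else 0) + (if x < y then depth_in B x l else depth_in B x r))"

lemma depth_in_Un: "A \<inter> B = {} \<Longrightarrow> depth_in (A \<union> B) x T = depth_in A x T + depth_in B x T"
  by (induction T) auto

lemma depth_in_mono: "A \<subseteq> B \<Longrightarrow> depth_in A x T \<le> depth_in B x T"
  by (induction T) auto

lemma depth_in_eq_depth: "set_tree T \<subseteq> B \<Longrightarrow> depth_in B x T = depth x T"
  by (induction T) auto

lemma bst_interval_top:
  "bst T \<Longrightarrow> a < b \<Longrightarrow> {a..<b} \<subseteq> set_tree T \<Longrightarrow>
   \<exists>r\<in>{a..<b}. \<forall>x\<in>{a..<b}. x \<noteq> r \<longrightarrow> 1 \<le> depth_in {r} x T"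
proof (induction T)
  case Leaf
  then show ?case by auto
next
  case (Node l y r)
  consider "a \<le> y \<and> y < b" | "y < a" | "b \<le> y" by linarith
  then show ?case
  proof cases
    case 1
    then show ?thesis by (intro bexI[of _ y]) auto
  next
    case 2
    then have "{a..<b} \<subseteq> set_tree r" using Node.prems by fastforce
    then obtain t where "t \<in> {a..<b}" "\<forall>x\<in>{a..<b}. x \<noteq> t \<longrightarrow> 1 \<le> depth_in {t} x r"
      using Node by auto
    then show ?thesis using 2 by (intro bexI[of _ t]) auto
  next
    case 3
    then have "{a..<b} \<subseteq> set_tree l" using Node.prems by fastforce
    then obtain t where "t \<in> {a..<b}" "\<forall>x\<in>{a..<b}. x \<noteq> t \<longrightarrow> 1 \<le> depth_in {t} x l"
      using Node by auto
    then show ?thesis using 3 by (intro bexI[of _ t]) auto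
  qed
qed

definition depth_cost :: "(nat \<Rightarrow> real) \<Rightarrow> nat set \<Rightarrow> nat set \<Rightarrow> nat tree \<Rightarrow> real" where
  "depth_cost \<mu> A B T = (\<Sum>x\<in>A. \<mu> x * real (depth_in B x T))"

lemma depth_cost_Un_left:
  "finite A \<Longrightarrow> finite A' \<Longrightarrow> A \<inter> A' = {} \<Longrightarrow>
   depth_cost \<mu> (A \<union> A') B T = depth_cost \<mu> A B T + depth_cost \<mu> A' B T"
  unfolding depth_cost_def by (rule sum.union_disjoint)

lemma depth_cost_Un_right:
  "B \<inter> B' = {} \<Longrightarrow> depth_cost \<mu> A (B \<union> B') T = depth_cost \<mu> A B T + depth_cost \<mu> A B' T"
  unfolding depth_cost_def by (simp add: depth_in_Un sum.distrib distrib_left)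

lemma depth_cost_nonneg: "\<forall>x\<in>A. 0 \<le> \<mu> x \<Longrightarrow> 0 \<le> depth_cost \<mu> A B T"
  unfolding depth_cost_def by (intro sum_nonneg) auto

lemma sum_le_depth_cost:
  assumes "\<forall>x\<in>A. 0 \<le> \<mu> x" and "\<forall>x\<in>A. 1 \<le> depth_in B x T"
  shows "sum \<mu> A \<le> depth_cost \<mu> A B T"
  unfolding depth_cost_def
proof (rule sum_mono)
  fix x assume "x \<in> A"
  then have "\<mu> x * 1 \<le> \<mu> x * real (depth_in B x T)"
    using assms by (intro mult_left_mono) auto
  then show "\<mu> x \<le> \<mu> x * real (depth_in B x T)" by simp
qed

lemma sum_split_at:
  assumes "a \<le> m" "m < b"
  shows "sum f {a..<b} = sum f {a..<m} + f m + sum f {Suc m..<b}"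
proof -
  have "sum f {a..<b} = sum f {a..<m} + sum f {m..<b}"
    using assms by (simp add: sum.atLeastLessThan_concat)
  also have "sum f {m..<b} = f m + sum f {Suc m..<b}"
    using assms(2) by (rule sum.atLeast_Suc_lessThan)
  finally show ?thesis by (simp add: add.assoc)
qed

lemma depth_cost_interval_excess:
  assumes "a \<le> m" "m < b"
  defines "L \<equiv> {a..<m}" and "R \<equiv> {Suc m..<b}" and "I \<equiv> {a..<b}"
  shows "depth_cost \<mu> I I T - depth_cost \<mu> L L T - depth_cost \<mu> R R T
    = depth_cost \<mu> (insert m R) L T + depth_cost \<mu> I {m} T + depth_cost \<mu> (insert m L) R T"
proof -
  have I: "I = L \<union> insert m R" "I = insert m L \<union> R" "I = L \<union> ({m} \<union> R)"
    using assms unfolding L_def R_def I_def by auto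
  have disjoint: "L \<inter> ({m} \<union> R) = {}" "{m} \<inter> R = {}" "L \<inter> insert m R = {}"
    "insert m L \<inter> R = {}"
    unfolding L_def R_def by auto
  have "depth_cost \<mu> I I T = depth_cost \<mu> I L T + depth_cost \<mu> I {m} T + depth_cost \<mu> I R T"
    using I(3) depth_cost_Un_right[OF disjoint(1)] depth_cost_Un_right[OF disjoint(2)] by simp
  moreover have "depth_cost \<mu> I L T = depth_cost \<mu> L L T + depth_cost \<mu> (insert m R) L T"
    using I(1) depth_cost_Un_left[OF _ _ disjoint(3)] unfolding L_def R_def by simp
  moreover have "depth_cost \<mu> I R T = depth_cost \<mu> (insert m L) R T + depth_cost \<mu> R R T"
    using I(2) depth_cost_Un_left[OF _ _ disjoint(4)] unfolding L_def R_def by simp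
  ultimately show ?thesis by simp
qed

lemma balanced_split_charge:
  fixes \<mu> :: "nat \<Rightarrow> real"
  assumes T: "bst T" "{a..<b} \<subseteq> set_tree T" and m: "a \<le> m" "m < b"
    and nonneg: "\<forall>x\<in>{a..<b}. 0 \<le> \<mu> x"
    and balanced: "sum \<mu> {Suc m..<b} \<le> sum \<mu> {a..<m} + \<mu> m"
                  "sum \<mu> {a..<m} \<le> sum \<mu> {Suc m..<b} + \<mu> m"
  defines "L \<equiv> {a..<m}" and "R \<equiv> {Suc m..<b}" and "I \<equiv> {a..<b}"
  shows "sum \<mu> L + sum \<mu> R
    \<le> 2 * (depth_cost \<mu> I I T - depth_cost \<mu> L L T - depth_cost \<mu> R R T)"
proof -
  have I: "I = L \<union> insert m R" "I = insert m L \<union> R" "L \<inter> R = {}"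
    and fin: "finite L" "finite R" and m_notin: "m \<notin> L" "m \<notin> R"
    using m unfolding L_def R_def I_def by auto
  have nonneg_on: "\<forall>x\<in>A. 0 \<le> \<mu> x" if "A \<subseteq> I" for A
    using nonneg that unfolding I_def by auto
  have excess: "depth_cost \<mu> I I T - depth_cost \<mu> L L T - depth_cost \<mu> R R T
    = depth_cost \<mu> (insert m R) L T + depth_cost \<mu> I {m} T + depth_cost \<mu> (insert m L) R T"
    unfolding L_def R_def I_def using m by (rule depth_cost_interval_excess)
  have excess_parts_nonneg: "0 \<le> depth_cost \<mu> (insert m R) L T" "0 \<le> depth_cost \<mu> I {m} T"
    "0 \<le> depth_cost \<mu> (insert m L) R T"
    using I by (auto intro!: depth_cost_nonneg nonneg_on)
  obtain r where r: "r \<in> I" "\<forall>x\<in>I. x \<noteq> r \<longrightarrow> 1 \<le> depth_in {r} x T"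
    using bst_interval_top[OF T(1) _ T(2)] m unfolding I_def by auto
  have ancestor: "\<forall>x\<in>A. 1 \<le> depth_in B x T" if "r \<in> B" "A \<subseteq> I - {r}" for A B
    using r that order_trans[OF _ depth_in_mono[of "{r}" B]] by blast
  consider "r \<in> L" | "r \<in> R" | "r = m" using r(1) I(1) by blast
  then show ?thesis
  proof cases
    case 1
    then have "sum \<mu> (insert m R) \<le> depth_cost \<mu> (insert m R) L T"
      using I m_notin by (intro sum_le_depth_cost nonneg_on ancestor) auto
    then show ?thesis using excess excess_parts_nonneg balanced fin m_notin
      unfolding L_def R_def by simp
  next
    case 2
    then have "sum \<mu> (insert m L) \<le> depth_cost \<mu> (insert m L) R T"
      using I m_notin by (intro sum_le_depth_cost nonneg_on ancestor) auto
    then show ?thesis using excess excess_parts_nonneg balanced fin m_notin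
      unfolding L_def R_def by simp
  next
    case 3
    have "sum \<mu> (L \<union> R) \<le> depth_cost \<mu> (L \<union> R) {m} T"
      using 3 I m_notin by (intro sum_le_depth_cost nonneg_on ancestor) auto
    also have "\<dots> \<le> depth_cost \<mu> I {m} T"
      unfolding depth_cost_def using I fin nonneg_on[of I] by (intro sum_mono2) auto
    finally show ?thesis using excess excess_parts_nonneg I(3) fin
      by (simp add: sum.union_disjoint)
  qed
qed

lemma med_root_balanced:
  fixes \<mu> :: "nat \<Rightarrow> real"
  assumes ab: "a < b" and nonneg: "\<forall>x\<in>{a..<b}. 0 \<le> \<mu> x"
  defines "m \<equiv> med_root \<mu> a b"
  shows "sum \<mu> {Suc m..<b} \<le> sum \<mu> {a..<m} + \<mu> m"
    and "sum \<mu> {a..<m} \<le> sum \<mu> {Suc m..<b} + \<mu> m"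
proof -
  define Q where "Q t \<longleftrightarrow> a \<le> t \<and> t < b \<and>
    (t = b - 1 \<or> (\<Sum>s\<in>{a..t}. \<mu> s) \<ge> (\<Sum>s\<in>{a..<b}. \<mu> s) / 2)" for t
  have m_Least: "m = Least Q" unfolding m_def med_root_def Q_def by simp
  have "Q (b - 1)" unfolding Q_def using ab by auto
  then have "Q m" unfolding m_Least by (rule LeastI)
  then have m: "a \<le> m" "m < b" unfolding Q_def by auto
  have split: "sum \<mu> {a..<b} = sum \<mu> {a..<m} + \<mu> m + sum \<mu> {Suc m..<b}"
    using m by (rule sum_split_at)
  have prefix: "sum \<mu> {a..m} = sum \<mu> {a..<m} + \<mu> m"
    using m by (simp add: atLeastLessThanSuc_atLeastAtMost[symmetric])
  have nonneg_sum: "0 \<le> sum \<mu> {a..<m}" "0 \<le> sum \<mu> {Suc m..<b}"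
    using nonneg m by (auto intro!: sum_nonneg)
  show "sum \<mu> {Suc m..<b} \<le> sum \<mu> {a..<m} + \<mu> m"
  proof (cases "m = b - 1")
    case True
    then have "{Suc m..<b} = {}" by auto
    then show ?thesis using nonneg_sum nonneg m by simp
  next
    case False
    then show ?thesis using \<open>Q m\<close> split prefix unfolding Q_def by simp
  qed
  show "sum \<mu> {a..<m} \<le> sum \<mu> {Suc m..<b} + \<mu> m"
  proof (cases "a < m")
    case True
    have "\<not> Q (m - 1)" using True m_Least by (intro not_less_Least) auto
    moreover have "{a..m - 1} = {a..<m}" using True by auto
    ultimately show ?thesis using True m split unfolding Q_def by auto
  next
    case False
    then show ?thesis using nonneg_sum nonneg m by simp
  qed
qed

lemma med_tree_bst_on_interval:
  "set_tree (med_tree \<mu> a b) = {a..<b} \<and> bst (med_tree \<mu> a b)"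
proof (induction \<mu> a b rule: med_tree.induct)
  case (1 \<mu> a b)
  show ?case
  proof (cases "b \<le> a")
    case False
    define m where "m = med_root \<mu> a b"
    have m: "a \<le> m" "m < b" using med_root_range[of a b \<mu>] False m_def by auto
    have "med_tree \<mu> a b = Node (med_tree \<mu> a m) m (med_tree \<mu> (Suc m) b)"
      using False m_def by simp
    then show ?thesis using "1.IH" False m m_def by auto
  qed simp
qed

lemma sum_depth_Node_left:
  assumes "\<forall>x\<in>A. x < y"
  shows "(\<Sum>x\<in>A. \<mu> x * real (depth x (Node l y r)))
    = sum \<mu> A + (\<Sum>x\<in>A. \<mu> x * real (depth x l))"
proof -
  have "(\<Sum>x\<in>A. \<mu> x * real (depth x (Node l y r))) = (\<Sum>x\<in>A. \<mu> x + \<mu> x * real (depth x l))"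
    using assms by (intro sum.cong) (auto simp: algebra_simps)
  then show ?thesis by (simp add: sum.distrib)
qed

lemma sum_depth_Node_right:
  assumes "\<forall>x\<in>A. y < x"
  shows "(\<Sum>x\<in>A. \<mu> x * real (depth x (Node l y r)))
    = sum \<mu> A + (\<Sum>x\<in>A. \<mu> x * real (depth x r))"
proof -
  have "(\<Sum>x\<in>A. \<mu> x * real (depth x (Node l y r))) = (\<Sum>x\<in>A. \<mu> x + \<mu> x * real (depth x r))"
    using assms by (intro sum.cong) (auto simp: algebra_simps)
  then show ?thesis by (simp add: sum.distrib)
qed

lemma med_tree_depth_le_twice_depth_cost:
  fixes \<mu> :: "nat \<Rightarrow> real"
  assumes "bst T" "{a..<b} \<subseteq> set_tree T" "\<forall>x\<in>{a..<b}. 0 \<le> \<mu> x"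
  shows "(\<Sum>x\<in>{a..<b}. \<mu> x * real (depth x (med_tree \<mu> a b)))
    \<le> 2 * depth_cost \<mu> {a..<b} {a..<b} T"
  using assms
proof (induction \<mu> a b rule: med_tree.induct)
  case (1 \<mu> a b)
  show ?case
  proof (cases "b \<le> a")
    case False
    define m where "m = med_root \<mu> a b"
    define lt where "lt = med_tree \<mu> a m"
    define rt where "rt = med_tree \<mu> (Suc m) b"
    have m: "a \<le> m" "m < b" using med_root_range[of a b \<mu>] False m_def by auto
    have tree: "med_tree \<mu> a b = Node lt m rt"
      using False unfolding lt_def rt_def m_def by simp
    have left: "(\<Sum>x\<in>{a..<m}. \<mu> x * real (depth x (Node lt m rt)))
        = sum \<mu> {a..<m} + (\<Sum>x\<in>{a..<m}. \<mu> x * real (depth x lt))"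
      by (rule sum_depth_Node_left) auto
    have right: "(\<Sum>x\<in>{Suc m..<b}. \<mu> x * real (depth x (Node lt m rt)))
        = sum \<mu> {Suc m..<b} + (\<Sum>x\<in>{Suc m..<b}. \<mu> x * real (depth x rt))"
      by (rule sum_depth_Node_right) auto
    have "(\<Sum>x\<in>{a..<b}. \<mu> x * real (depth x (Node lt m rt)))
      = sum \<mu> {a..<m} + sum \<mu> {Suc m..<b}
        + (\<Sum>x\<in>{a..<m}. \<mu> x * real (depth x lt)) + (\<Sum>x\<in>{Suc m..<b}. \<mu> x * real (depth x rt))"
      unfolding sum_split_at[OF m] left right by simp
    moreover have "(\<Sum>x\<in>{a..<m}. \<mu> x * real (depth x lt)) \<le> 2 * depth_cost \<mu> {a..<m} {a..<m} T"
      unfolding lt_def m_def using "1.prems" m False m_def by (intro "1.IH"(1)) auto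
    moreover have "(\<Sum>x\<in>{Suc m..<b}. \<mu> x * real (depth x rt))
        \<le> 2 * depth_cost \<mu> {Suc m..<b} {Suc m..<b} T"
      unfolding rt_def m_def using "1.prems" m False m_def by (intro "1.IH"(2)) auto
    moreover have "sum \<mu> {a..<m} + sum \<mu> {Suc m..<b} \<le> 2 * (depth_cost \<mu> {a..<b} {a..<b} T
        - depth_cost \<mu> {a..<m} {a..<m} T - depth_cost \<mu> {Suc m..<b} {Suc m..<b} T)"
      using "1.prems" m med_root_balanced[of a b \<mu>] False m_def
      by (intro balanced_split_charge) auto
    ultimately show ?thesis unfolding tree by argo
  qed (simp add: depth_cost_def)
qed

lemma finite_trees_size_le:
  assumes "finite A"
  shows "finite {T :: 'a tree. size T \<le> k \<and> set_tree T \<subseteq> A}"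
proof (induction k)
  case 0
  have "{T :: 'a tree. size T \<le> 0 \<and> set_tree T \<subseteq> A} = {Leaf}" by auto
  then show ?case by simp
next
  case (Suc k)
  let ?S = "{T :: 'a tree. size T \<le> k \<and> set_tree T \<subseteq> A}"
  have "{T. size T \<le> Suc k \<and> set_tree T \<subseteq> A}
      \<subseteq> insert Leaf ((\<lambda>(l, x, r). Node l x r) ` (?S \<times> A \<times> ?S))"
  proof
    fix T assume T: "T \<in> {T. size T \<le> Suc k \<and> set_tree T \<subseteq> A}"
    show "T \<in> insert Leaf ((\<lambda>(l, x, r). Node l x r) ` (?S \<times> A \<times> ?S))"
    proof (cases T)
      case (Node l x r)
      then have "(l, x, r) \<in> ?S \<times> A \<times> ?S" using T by auto
      then show ?thesis unfolding Node by (intro insertI2 rev_image_eqI[of "(l, x, r)"]) simp_all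
    qed simp
  qed
  moreover have "finite (insert Leaf ((\<lambda>(l, x, r). Node l x r) ` (?S \<times> A \<times> ?S)))"
    using Suc assms by simp
  ultimately show ?case by (rule finite_subset)
qed

lemma finite_bsts_on: "finite (bsts_on n)"
proof -
  have "size T \<le> n" if "T \<in> bsts_on n" for T
  proof -
    have "distinct (inorder T)" and set: "set_tree T = {1..n}"
      using that unfolding bsts_on_def by (auto simp: bst_iff_sorted_wrt_less strict_sorted_iff)
    then show ?thesis by (metis card_atLeastAtMost diff_Suc_1 distinct_card length_inorder
      order_refl set_inorder)
  qed
  then have "bsts_on n \<subseteq> {T. size T \<le> n \<and> set_tree T \<subseteq> {1..n}}"
    unfolding bsts_on_def by auto
  then show ?thesis using finite_trees_size_le[of "{1..n}" n] by (rule finite_subset) simp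
qed

lemma median_bst_in_bsts_on: "median_bst \<mu> n \<in> bsts_on n"
  using med_tree_bst_on_interval[of \<mu> 1 "Suc n"]
  unfolding median_bst_def bsts_on_def by (simp add: atLeastLessThanSuc_atLeastAtMost)

lemma median_bst_le_twice_exp_depth:
  fixes \<mu> :: "nat \<Rightarrow> real"
  assumes "\<forall>x\<in>{1..n}. 0 \<le> \<mu> x" and "T \<in> bsts_on n"
  shows "exp_depth \<mu> n (median_bst \<mu> n) \<le> 2 * exp_depth \<mu> n T"
proof -
  have interval: "{1..<Suc n} = {1..n}" by auto
  have T: "bst T" "set_tree T = {1..n}" using assms(2) unfolding bsts_on_def by auto
  have "depth_cost \<mu> {1..n} {1..n} T = exp_depth \<mu> n T"
    unfolding depth_cost_def exp_depth_def using T(2) by (simp add: depth_in_eq_depth)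
  then show ?thesis
    using med_tree_depth_le_twice_depth_cost[of T 1 "Suc n" \<mu>] T assms(1)
    unfolding exp_depth_def median_bst_def interval by simp
qed

lemma median_bst_le_twice_opt:
  fixes \<mu> :: "nat \<Rightarrow> real"
  assumes "\<forall>x\<in>{1..n}. 0 \<le> \<mu> x"
  shows "exp_depth \<mu> n (median_bst \<mu> n) \<le> 2 * Min (exp_depth \<mu> n ` bsts_on n)"
proof -
  have "Min (exp_depth \<mu> n ` bsts_on n) \<in> exp_depth \<mu> n ` bsts_on n"
    using finite_bsts_on median_bst_in_bsts_on by (intro Min_in) auto
  then show ?thesis using median_bst_le_twice_exp_depth[OF assms] by auto
qed

lemma Delta_le_twice_Delta_opt:
  assumes "\<And>r x. r \<in> {1..d} \<Longrightarrow> x \<in> {1..n} \<Longrightarrow> 0 \<le> \<mu> r x"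
  shows "Delta \<mu> d n \<le> 2 * Delta_opt \<mu> d n"
  unfolding Delta_def Delta_opt_def sum_distrib_left
  using assms by (intro sum_mono median_bst_le_twice_opt) auto

lemma Delta_nonneg:
  assumes "\<And>r x. r \<in> {1..d} \<Longrightarrow> x \<in> {1..n} \<Longrightarrow> 0 \<le> \<mu> r x"
  shows "0 \<le> Delta \<mu> d n"
  unfolding Delta_def exp_depth_def using assms by (intro sum_nonneg) auto

theorem lemma5p17:
  fixes \<mu> :: "nat \<Rightarrow> nat \<Rightarrow> real" and d n :: nat
  assumes nonneg: "\<And>r x. r \<in> {1..d} \<Longrightarrow> x \<in> {1..n} \<Longrightarrow> \<mu> r x \<ge> 0"
    and total: "\<And>r. r \<in> {1..d} \<Longrightarrow> (\<Sum>x\<in>{1..n}. \<mu> r x) = 1"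
  shows "Delta \<mu> d n \<le> 5 * Delta_opt \<mu> d n"
proof -
  have "Delta \<mu> d n \<le> 2 * Delta_opt \<mu> d n" using nonneg by (rule Delta_le_twice_Delta_opt)
  moreover have "0 \<le> Delta \<mu> d n" using nonneg by (rule Delta_nonneg)
  ultimately show ?thesis by linarith
qed

end
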